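(* Let $m\ge1$ and let $X\subset\sqrt{m}\,\mathbb{S}^{m-1}$ be a spherical $2$-design with $|X|=n$. Then $F_0=\frac1nJ$ and $F_1=G$.
   Context: $\sqrt{m}\,\mathbb{S}^{m-1}=\{\bm x\in\mathbb{R}^m:\bm x\cdot\bm x=m\}$. $X$ is a spherical $2$-design if the average over $X$ of every polynomial of degree at most $2$ equals its average over the sphere (equivalently $\sum_{\bm y\in X}\bm x\cdot\bm y=0$ and $\frac1n\sum_{\bm z\in X}(\bm x\cdot\bm z)(\bm z\cdot\bm y)=\bm x\cdot\bm y$ for all $\bm x,\bm y\in X$). $C(X)$: real functions on $X$ with $(f,g)=\frac1n\sum_{\bm x}f(\bm x)g(\bm x)$. $\zeta_{\bm a}(p)(\bm x)=p(\bm a\cdot\bm x)$. $\mathrm{Pol}_0(X)$ = constants, $\mathrm{Pol}_1(X)=\mathrm{Span}\{\zeta_{\bm a}(p):\bm a\in X,\deg p\le1\}$, $\mathrm{Pol}_k(X)=\mathrm{Span}\{fg:f\in\mathrm{Pol}_1(X),g\in\mathrm{Pol}_{k-1}(X)\}$. $S=\min\{i:\mathrm{Pol}_i(X)=C(X)\}$. $\mathrm{Harm}_0=\mathrm{Pol}_0$, $\mathrm{Harm}_k=\mathrm{Pol}_k\cap\mathrm{Pol}_{k-1}^\perp$ ($k\ge1$). Matrices indexed by $X\times X$ act on $C(X)$ by $(Mf)(\bm x)=\sum_{\bm y}M_{\bm x,\bm y}f(\bm y)$, and $F_i$ ($0\le i\le S$) is the matrix of the orthogonal projection onto $\mathrm{Harm}_i(X)$.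 $J$ is the all-ones matrix and $G=\frac1n(\bm x\cdot\bm y)_{\bm x,\bm y\in X}$. *)

theory Defs
  imports "HOL-Analysis.Analysis" "HOL-Computational_Algebra.Polynomial"
begin

text \<open>Functions on X are represented as total functions on real^'m; only their
values on X matter (the inner product and all conditions only look at X).\<close>

definition lin_span :: "('a \<Rightarrow> real) set \<Rightarrow> ('a \<Rightarrow> real) set" where
  "lin_span A = {f. \<exists>S c. finite S \<and> S \<subseteq> A \<and> f = (\<lambda>x. \<Sum>g\<in>S. c g * g x)}"

definition Pol1 :: "(real^'m) set \<Rightarrow> (real^'m \<Rightarrow> real) set" where
  "Pol1 X = lin_span {(\<lambda>x. poly p (a \<bullet> x)) | a p. a \<in> X \<and> degree p \<le> 1}"

fun Pol :: "(real^'m) set \<Rightarrow> nat \<Rightarrow> (real^'m \<Rightarrow> real) set" where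
  "Pol X 0 = {(\<lambda>x. c) | c. True}"
| "Pol X (Suc 0) = Pol1 X"
| "Pol X (Suc (Suc k)) =
     lin_span {(\<lambda>x. f x * g x) | f g. f \<in> Pol1 X \<and> g \<in> Pol X (Suc k)}"

definition ipX :: "(real^'m) set \<Rightarrow> (real^'m \<Rightarrow> real) \<Rightarrow> (real^'m \<Rightarrow> real) \<Rightarrow> real" where
  "ipX X f g = (1 / real (card X)) * (\<Sum>x\<in>X. f x * g x)"

fun Harm :: "(real^'m) set \<Rightarrow> nat \<Rightarrow> (real^'m \<Rightarrow> real) set" where
  "Harm X 0 = Pol X 0"
| "Harm X (Suc k) = {f \<in> Pol X (Suc k). \<forall>g \<in> Pol X k. ipX X f g = 0}"

text \<open>M (indexed by X \<times> X) is the matrix of the orthogonal projection of C(X)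
onto the subspace V: for every f, Mf lies in V (on X) and f - Mf is orthogonal to V.\<close>
definition is_proj_matrix ::
  "(real^'m) set \<Rightarrow> (real^'m \<Rightarrow> real) set \<Rightarrow> (real^'m \<Rightarrow> real^'m \<Rightarrow> real) \<Rightarrow> bool" where
  "is_proj_matrix X V M \<longleftrightarrow>
     (\<forall>f. (\<exists>h\<in>V. \<forall>x\<in>X. (\<Sum>y\<in>X. M x y * f y) = h x) \<and>
          (\<forall>g\<in>V. ipX X (\<lambda>x. f x - (\<Sum>y\<in>X. M x y * f y)) g = 0))"

definition spherical_2_design :: "(real^'m) set \<Rightarrow> bool" where
  "spherical_2_design X \<longleftrightarrow>
     (\<forall>x\<in>X. (\<Sum>y\<in>X. x \<bullet> y) = 0) \<and>
     (\<forall>x\<in>X. \<forall>y\<in>X. (1 / real (card X)) * (\<Sum>z\<in>X. (x \<bullet> z) * (z \<bullet> y)) = x \<bullet> y)"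

end

theory Submission
  imports Defs
begin

text \<open>A matrix M that is symmetric on X, maps every function into V and fixes V is the
  orthogonal projection onto V, since then (f - Mf, g) = (f, g) - (f, Mg) = 0 for g in V. For V = Harm_1, every
  g in Pol_1 has the form g(x) = \<alpha> + \<Sum>_a d_a (a \<cdot> x); the first design condition makes
  \<alpha> = 0 when g is orthogonal to the constants and makes the image of G orthogonal to the
  constants, while the second design condition says exactly that G fixes the functions
  x \<mapsto> a \<cdot> x.\<close>

lemma is_proj_matrixI:
  assumes into: "\<And>f. \<exists>h\<in>V. \<forall>x\<in>X. (\<Sum>y\<in>X. M x y * f y) = h x"
    and symmetric: "\<And>x y. x \<in> X \<Longrightarrow> y \<in> X \<Longrightarrow> M x y = M y x"
    and fixes_V: "\<And>g x. g \<in> V \<Longrightarrow> x \<in> X \<Longrightarrow> (\<Sum>y\<in>X. M x y * g y) = g x"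
  shows "is_proj_matrix X V M"
  unfolding is_proj_matrix_def
proof (intro allI conjI ballI)
  fix f g
  show "\<exists>h\<in>V. \<forall>x\<in>X. (\<Sum>y\<in>X. M x y * f y) = h x" by (fact into)
  assume g: "g \<in> V"
  have "(\<Sum>x\<in>X. (\<Sum>y\<in>X. M x y * f y) * g x) = (\<Sum>x\<in>X. \<Sum>y\<in>X. f y * (M y x * g x))"
    unfolding sum_distrib_right by (intro sum.cong refl) (simp add: symmetric)
  also have "\<dots> = (\<Sum>y\<in>X. f y * (\<Sum>x\<in>X. M y x * g x))"
    by (subst sum.swap) (simp add: sum_distrib_left)
  also have "\<dots> = (\<Sum>y\<in>X. f y * g y)"
    using fixes_V[OF g] by simp
  finally show "ipX X (\<lambda>x. f x - (\<Sum>y\<in>X. M x y * f y)) g = 0"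
    unfolding ipX_def by (simp add: left_diff_distrib sum_subtractf)
qed

lemma averaging_is_proj_matrix:
  fixes X :: "(real^'m) set"
  assumes "finite X" "X \<noteq> {}"
  shows "is_proj_matrix X (Harm X 0) (\<lambda>x y. 1 / real (card X))"
proof (rule is_proj_matrixI)
  show "\<exists>h\<in>Harm X 0. \<forall>x\<in>X. (\<Sum>y\<in>X. 1 / real (card X) * f y) = h x" for f
    by auto
  show "(\<Sum>y\<in>X. 1 / real (card X) * g y) = g x" if g: "g \<in> Harm X 0" for g x
  proof -
    obtain c where "g = (\<lambda>_. c)" using g by auto
    then show ?thesis using assms by simp
  qed
qed simp

lemma lin_span_sum:
  assumes "finite I" "\<forall>i\<in>I. g i \<in> A"
  shows "(\<lambda>x. \<Sum>i\<in>I. d i * g i x) \<in> lin_span A"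
proof -
  define c where "c h = (\<Sum>i\<in>{i\<in>I. g i = h}. d i)" for h
  have "(\<lambda>x. \<Sum>i\<in>I. d i * g i x) = (\<lambda>x. \<Sum>h\<in>g`I. c h * h x)"
  proof
    fix x
    have "(\<Sum>h\<in>g`I. c h * h x) = (\<Sum>h\<in>g`I. \<Sum>i\<in>{i\<in>I. g i = h}. d i * g i x)"
      unfolding c_def sum_distrib_right by (intro sum.cong) auto
    also have "\<dots> = (\<Sum>i\<in>I. d i * g i x)"
      using sum.group[OF assms(1) finite_imageI[OF assms(1)], where g=g and h="\<lambda>i. d i * g i x"] by simp
    finally show "(\<Sum>i\<in>I. d i * g i x) = (\<Sum>h\<in>g`I. c h * h x)" by simp
  qed
  then show ?thesis unfolding lin_span_def using assms by blast
qed

lemma poly_degree_le_1: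
  fixes p :: "real poly"
  assumes "degree p \<le> 1"
  shows "poly p t = coeff p 0 + coeff p 1 * t"
proof (cases "degree p = 0")
  case True
  then have "coeff p 1 = 0" by (simp add: coeff_eq_0)
  with True show ?thesis by (simp add: poly_altdef)
next
  case False
  with assms have "degree p = 1" by simp
  then show ?thesis by (simp add: poly_altdef)
qed

lemma Pol1_affine_form:
  fixes X :: "(real^'m) set"
  assumes fin: "finite X" and g: "g \<in> Pol1 X"
  obtains \<alpha> d where "\<And>x. g x = \<alpha> + (\<Sum>a\<in>X. d a * (a \<bullet> x))"
proof -
  obtain S c where S: "finite S" "S \<subseteq> {(\<lambda>x. poly p (a \<bullet> x)) | a p. a \<in> X \<and> degree p \<le> 1}"
    and g_eq: "g = (\<lambda>x. \<Sum>s\<in>S. c s * s x)"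
    using g unfolding Pol1_def lin_span_def by blast
  have "\<forall>s\<in>S. \<exists>a p. s = (\<lambda>x. poly p (a \<bullet> x)) \<and> a \<in> X \<and> degree p \<le> (1::nat)"
    using S(2) by blast
  then obtain A P where AP: "\<And>s. s \<in> S \<Longrightarrow>
      s = (\<lambda>x. poly (P s) (A s \<bullet> x)) \<and> A s \<in> X \<and> degree (P s) \<le> 1"
    by metis
  define \<alpha> where "\<alpha> = (\<Sum>s\<in>S. c s * coeff (P s) 0)"
  define d where "d a = (\<Sum>s\<in>{s\<in>S. A s = a}. c s * coeff (P s) 1)" for a
  have "g x = \<alpha> + (\<Sum>a\<in>X. d a * (a \<bullet> x))" for x
  proof -
    have "g x = (\<Sum>s\<in>S. c s * (coeff (P s) 0 + coeff (P s) 1 * (A s \<bullet> x)))"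
      unfolding g_eq using AP poly_degree_le_1 by (intro sum.cong) (metis, metis)
    also have "\<dots> = \<alpha> + (\<Sum>s\<in>S. c s * coeff (P s) 1 * (A s \<bullet> x))"
      unfolding \<alpha>_def sum.distrib[symmetric] by (intro sum.cong) (auto simp: algebra_simps)
    also have "(\<Sum>s\<in>S. c s * coeff (P s) 1 * (A s \<bullet> x))
        = (\<Sum>a\<in>X. \<Sum>s\<in>{s\<in>S. A s = a}. c s * coeff (P s) 1 * (A s \<bullet> x))"
      using sum.group[OF S(1) fin, where g=A and h="\<lambda>s. c s * coeff (P s) 1 * (A s \<bullet> x)"] AP
      by (metis (no_types, lifting) image_subset_iff)
    also have "\<dots> = (\<Sum>a\<in>X. d a * (a \<bullet> x))"
      unfolding d_def sum_distrib_right by (intro sum.cong refl) auto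
    finally show ?thesis .
  qed
  then show thesis by (fact that)
qed

lemma linear_form_in_Pol1:
  fixes X :: "(real^'m) set"
  assumes "finite X"
  shows "(\<lambda>x. \<Sum>a\<in>X. d a * (a \<bullet> x)) \<in> Pol1 X"
proof -
  have "(\<lambda>x. \<Sum>a\<in>X. d a * poly [:0, 1:] (a \<bullet> x)) \<in> Pol1 X"
    unfolding Pol1_def
    by (rule lin_span_sum[OF assms]) (auto intro!: exI[of _ "[:0, 1:]"])
  then show ?thesis by simp
qed

lemma design_sum_inner_eq_0:
  assumes "spherical_2_design X" "a \<in> X"
  shows "(\<Sum>x\<in>X. a \<bullet> x) = 0" "(\<Sum>x\<in>X. x \<bullet> a) = 0"
proof -
  show "(\<Sum>x\<in>X. a \<bullet> x) = 0"
    using assms by (simp add: spherical_2_design_def)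
  then show "(\<Sum>x\<in>X. x \<bullet> a) = 0"
    by (simp add: inner_commute)
qed

lemma Harm1_linear_form:
  fixes X :: "(real^'m) set"
  assumes "finite X" "X \<noteq> {}" "spherical_2_design X" and g: "g \<in> Harm X 1"
  obtains d where "\<And>x. g x = (\<Sum>a\<in>X. d a * (a \<bullet> x))"
proof -
  have "g \<in> Pol1 X" and mean_zero: "ipX X g (\<lambda>x. 1) = 0"
    using g by (auto simp: One_nat_def)
  then obtain \<alpha> d where g_eq: "\<And>x. g x = \<alpha> + (\<Sum>a\<in>X. d a * (a \<bullet> x))"
    using Pol1_affine_form[OF assms(1)] by blast
  have "(\<Sum>x\<in>X. g x) = real (card X) * \<alpha> + (\<Sum>a\<in>X. d a * (\<Sum>x\<in>X. a \<bullet> x))"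
    unfolding g_eq sum.distrib by (subst sum.swap) (simp add: sum_distrib_left)
  also have "\<dots> = real (card X) * \<alpha>"
    using design_sum_inner_eq_0[OF assms(3)] by simp
  finally have "\<alpha> = 0"
    using mean_zero assms(1,2) by (simp add: ipX_def)
  with g_eq show thesis by (intro that) simp
qed

lemma design_gram_fixes_linear_form:
  fixes X :: "(real^'m) set"
  assumes "finite X" "X \<noteq> {}" "spherical_2_design X" "x \<in> X"
  shows "(\<Sum>y\<in>X. (x \<bullet> y) / real (card X) * (\<Sum>a\<in>X. d a * (a \<bullet> y)))
       = (\<Sum>a\<in>X. d a * (a \<bullet> x))"
proof -
  have gram: "(\<Sum>y\<in>X. (x \<bullet> y) * (y \<bullet> a)) = real (card X) * (x \<bullet> a)" if "a \<in> X" for a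
    using assms that by (auto simp: spherical_2_design_def field_simps)
  have "(\<Sum>y\<in>X. (x \<bullet> y) / real (card X) * (\<Sum>a\<in>X. d a * (a \<bullet> y)))
      = (\<Sum>y\<in>X. \<Sum>a\<in>X. d a / real (card X) * ((x \<bullet> y) * (y \<bullet> a)))"
    unfolding sum_distrib_left by (intro sum.cong refl) (simp add: inner_commute)
  also have "\<dots> = (\<Sum>a\<in>X. d a / real (card X) * (\<Sum>y\<in>X. (x \<bullet> y) * (y \<bullet> a)))"
    by (subst sum.swap) (simp add: sum_distrib_left)
  also have "\<dots> = (\<Sum>a\<in>X. d a / real (card X) * (real (card X) * (x \<bullet> a)))"
    by (simp add: gram)
  also have "\<dots> = (\<Sum>a\<in>X. d a * (a \<bullet> x))"
    using assms(1,2) by (simp add: inner_commute)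
  finally show ?thesis .
qed

lemma gram_image_in_Harm1:
  fixes X :: "(real^'m) set"
  assumes "finite X" "spherical_2_design X"
  shows "(\<lambda>x. \<Sum>y\<in>X. (x \<bullet> y) / real (card X) * f y) \<in> Harm X 1"
proof -
  let ?h = "\<lambda>x. \<Sum>y\<in>X. (x \<bullet> y) / real (card X) * f y"
  have "?h = (\<lambda>x. \<Sum>y\<in>X. (f y / real (card X)) * (y \<bullet> x))"
    by (intro ext sum.cong refl) (simp add: inner_commute)
  then have in_Pol1: "?h \<in> Pol1 X"
    using linear_form_in_Pol1[OF assms(1)] by (simp only:)
  have "(\<Sum>x\<in>X. ?h x) = (\<Sum>y\<in>X. (\<Sum>x\<in>X. x \<bullet> y) * (f y / real (card X)))"
    by (subst sum.swap) (simp add: sum_distrib_right sum_divide_distrib)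
  also have "\<dots> = 0"
    using design_sum_inner_eq_0(2)[OF assms(2)] by simp
  finally have "ipX X ?h g = 0" if "g \<in> Pol X 0" for g
    using that by (auto simp: ipX_def sum_distrib_right[symmetric])
  with in_Pol1 show ?thesis by (simp add: One_nat_def)
qed

lemma gram_is_proj_matrix:
  fixes X :: "(real^'m) set"
  assumes "finite X" "X \<noteq> {}" "spherical_2_design X"
  shows "is_proj_matrix X (Harm X 1) (\<lambda>x y. (x \<bullet> y) / real (card X))"
proof (rule is_proj_matrixI)
  show "\<exists>h\<in>Harm X 1. \<forall>x\<in>X. (\<Sum>y\<in>X. (x \<bullet> y) / real (card X) * f y) = h x" for f
    by (rule bexI[OF _ gram_image_in_Harm1[OF assms(1,3), of f]]) simp
  show "(\<Sum>y\<in>X. (x \<bullet> y) / real (card X) * g y) = g x" if g: "g \<in> Harm X 1" and x: "x \<in> X" for g x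
  proof -
    obtain d where "\<And>x. g x = (\<Sum>a\<in>X. d a * (a \<bullet> x))"
      using Harm1_linear_form[OF assms g] by blast
    then show ?thesis
      using design_gram_fixes_linear_form[OF assms x] by simp
  qed
qed (simp add: inner_commute)

theorem lemma3p3:
  fixes X :: "(real^'m) set"
  assumes "finite X" and "X \<noteq> {}"
    and "\<forall>x\<in>X. x \<bullet> x = real CARD('m)"
    and "spherical_2_design X"
  shows "is_proj_matrix X (Harm X 0) (\<lambda>x y. 1 / real (card X))
       \<and> is_proj_matrix X (Harm X 1) (\<lambda>x y. (x \<bullet> y) / real (card X))"
  using averaging_is_proj_matrix[OF assms(1,2)] gram_is_proj_matrix[OF assms(1,2,4)] by blast

end
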